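(* Let $Y_1,\dots,Y_n$ be jointly distributed (not necessarily independent) nonnegative integer-valued random variables, and let $X_1,\dots,X_n$ be independent Bernoulli random variables taking values $0$ and $1$ such that $\mathbb{E}[X_i]=\mathbb{E}[Y_i]$ for each $i$. Let $P$ be a Poisson random variable with parameter $1$ independent of $Y_1,\dots,Y_n$. Then $X_1+\dots+X_n\le_{cx}P(Y_1+\dots+Y_n)$. In particular, for every $q\ge1$, $\|\sum_{i=1}^n X_i\|_q\le A_q^{1/q}\|\sum_{i=1}^n Y_i\|_q$.
   Context: $X\le_{cx}Y$ means $\mathbb{E}\varphi(X)\le\mathbb{E}\varphi(Y)$ for every convex $\varphi:\mathbb{R}\to\mathbb{R}$ for which both expectations exist. $A_q=\mathbb{E}[P^q]$ for $P$ Poisson with parameter $1$, and $\|Z\|_q=(\mathbb{E}|Z|^q)^{1/q}$. *)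

theory Defs
  imports "HOL-Probability.Probability"
begin

definition cx_le :: "'a measure \<Rightarrow> ('a \<Rightarrow> real) \<Rightarrow> 'b measure \<Rightarrow> ('b \<Rightarrow> real) \<Rightarrow> bool" where
  "cx_le M X N Y \<longleftrightarrow>
     (\<forall>\<phi> :: real \<Rightarrow> real. convex_on UNIV \<phi> \<longrightarrow>
        integrable M (\<lambda>\<omega>. \<phi> (X \<omega>)) \<longrightarrow> integrable N (\<lambda>\<omega>. \<phi> (Y \<omega>)) \<longrightarrow>
        (\<integral>\<omega>. \<phi> (X \<omega>) \<partial>M) \<le> (\<integral>\<omega>. \<phi> (Y \<omega>) \<partial>N))"

definition A_q :: "real \<Rightarrow> real" where
  "A_q q = measure_pmf.expectation (poisson_pmf 1) (\<lambda>k. real k powr q)"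

end

theory Submission
  imports Defs
begin

text \<open>
  For a convex \<open>\<psi>\<close> write \<open>\<Pi>\<psi>(a) = E \<psi>(Poisson(a))\<close>. Trading the Bernoulli variables one at a time
  for independent Poisson variables with the same means gives \<open>E \<psi>(\<Sum>X\<^sub>i) \<le> \<Pi>\<psi>(\<lambda>)\<close> with
  \<open>\<lambda> = \<Sum>E X\<^sub>i = E S\<close>, \<open>S = \<Sum>Y\<^sub>i\<close>. Since Poisson(\<open>m\<close>) is below \<open>m\<close> times a Poisson(1) variable
  in the convex order, and \<open>\<Pi>\<psi>\<close> lies below its chords between consecutive integers, \<open>\<Pi>\<psi>(\<lambda>)\<close> is
  at most the linear interpolation of \<open>s \<mapsto> E \<psi>(s P)\<close> between \<open>\<lfloor>\<lambda>\<rfloor>\<close> and \<open>\<lfloor>\<lambda>\<rfloor> + 1\<close>. For each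
  value \<open>j\<close> of \<open>P\<close>, the function \<open>s \<mapsto> \<psi>(j s)\<close> lies above that chord at every integer \<open>s\<close>, so
  the interpolation is at most \<open>E \<psi>(P S)\<close>. A general convex \<open>\<phi>\<close> is first replaced by the
  maximum of its chords over \<open>[j, j + 1]\<close>, \<open>j \<le> n\<close>, which agrees with \<open>\<phi>\<close> at the values of
  \<open>\<Sum>X\<^sub>i\<close>, lies below \<open>\<phi>\<close> on \<open>\<nat>\<close> and has linear growth. The moment bound is the convex order
  for \<open>\<bar>x\<bar>\<^sup>q\<close> together with \<open>E \<bar>P S\<bar>\<^sup>q = A\<^sub>q E S\<^sup>q\<close>.
\<close>

section \<open>Convex functions on the real line\<close>

lemma convex_on_affine_comp:
  fixes \<psi> :: "real \<Rightarrow> real"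
  assumes "convex_on UNIV \<psi>"
  shows "convex_on UNIV (\<lambda>x. \<psi> (a + b * x))"
proof (rule convex_onI)
  fix t x y :: real assume t: "0 < t" "t < 1"
  have "a + b * ((1 - t) *\<^sub>R x + t *\<^sub>R y) = (1 - t) *\<^sub>R (a + b * x) + t *\<^sub>R (a + b * y)"
    by (simp add: algebra_simps)
  moreover have "\<psi> ((1 - t) *\<^sub>R (a + b * x) + t *\<^sub>R (a + b * y)) \<le> (1 - t) * \<psi> (a + b * x) + t * \<psi> (a + b * y)"
    using t by (intro convex_onD[OF assms]) auto
  ultimately show "\<psi> (a + b * ((1 - t) *\<^sub>R x + t *\<^sub>R y)) \<le> (1 - t) * \<psi> (a + b * x) + t * \<psi> (a + b * y)"
    by simp
qed simp

lemma convex_on_chord_le: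
  fixes f :: "real \<Rightarrow> real"
  assumes f: "convex_on UNIV f" and ab: "a < b" and y: "y \<le> a \<or> b \<le> y"
  shows "f a + (f b - f a) / (b - a) * (y - a) \<le> f y"
proof -
  define s where "s = (f b - f a) / (b - a)"
  have "f a + s * (y - a) \<le> f y"
    using y
  proof
    assume "y \<le> a"
    show ?thesis
    proof (cases "y = a")
      case False
      with \<open>y \<le> a\<close> have "y < a" by simp
      from convex_on_slope_le[OF f _ _ this ab]
      have "(f y - f a) / (y - a) \<le> (f a - f b) / (a - b)" by auto
      then have "(f a - f y) / (a - y) \<le> s"
        unfolding s_def by (smt (verit) minus_divide_divide)
      then show ?thesis
        using \<open>y < a\<close> by (simp add: divide_le_eq algebra_simps)
    qed simp
  next
    assume "b \<le> y"
    show ?thesis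
    proof (cases "y = b")
      case False
      with \<open>b \<le> y\<close> have "b < y" by simp
      from convex_on_slope_le[OF f _ _ ab this]
      have "(f a - f b) / (a - b) \<le> (f a - f y) / (a - y)" by auto
      then have "s \<le> (f y - f a) / (y - a)"
        unfolding s_def by (smt (verit) minus_divide_divide)
      then show ?thesis
        using \<open>b < y\<close> ab by (simp add: le_divide_eq algebra_simps)
    qed (use ab in \<open>simp add: s_def\<close>)
  qed
  then show ?thesis by (simp add: s_def)
qed

corollary convex_on_unit_chord_le:
  fixes f :: "real \<Rightarrow> real"
  assumes "convex_on UNIV f" and "y \<le> a \<or> a + 1 \<le> y"
  shows "f a + (f (a + 1) - f a) * (y - a) \<le> f y"
  using convex_on_chord_le[OF assms(1), of a "a + 1" y] assms(2) by simp

lemma convex_on_split: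
  fixes \<psi> :: "real \<Rightarrow> real"
  assumes "convex_on UNIV \<psi>" and m: "m \<ge> 0"
  shows "\<psi> (x + m * y) \<le> m / (m + 1) * \<psi> ((m + 1) * y) + 1 / (m + 1) * \<psi> ((m + 1) * x)"
proof -
  have w: "1 - 1 / (m + 1) = m / (m + 1)"
    using m by (simp add: field_simps)
  have "m / (m + 1) * ((m + 1) * y) = m * y" "1 / (m + 1) * ((m + 1) * x) = x"
    using m by simp_all
  then have "x + m * y = (1 - 1 / (m + 1)) *\<^sub>R ((m + 1) * y) + (1 / (m + 1)) *\<^sub>R ((m + 1) * x)"
    unfolding w by simp
  then show ?thesis
    using convex_onD[OF assms(1), of "1 / (m + 1)" "(m + 1) * y" "(m + 1) * x"] m
    unfolding w by (simp add: add.commute)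
qed

lemma convex_on_abs_powr:
  assumes q: "q \<ge> 1"
  shows "convex_on UNIV (\<lambda>x::real. \<bar>x\<bar> powr q)"
proof (rule convex_onI)
  fix t x y :: real assume t: "0 < t" "t < 1"
  define a b where "a = \<bar>x\<bar>" and "b = \<bar>y\<bar>"
  have ab: "a \<ge> 0" "b \<ge> 0" by (auto simp: a_def b_def)
  have "\<bar>(1 - t) *\<^sub>R x + t *\<^sub>R y\<bar> \<le> (1 - t) * a + t * b"
    using t unfolding a_def b_def by (simp add: abs_triangle_ineq[THEN order_trans] abs_mult)
  then have 1: "\<bar>(1 - t) *\<^sub>R x + t *\<^sub>R y\<bar> powr q \<le> ((1 - t) * a + t * b) powr q"
    using q by (intro powr_mono2) auto
  have 2: "((1 - t) * a + t * b) powr q \<le> (1 - t) * a powr q + t * b powr q"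
  proof (cases "a = 0 \<or> b = 0")
    case True
    have "s powr q \<le> s" if "0 \<le> s" "s \<le> 1" for s :: real
    proof -
      have "s powr q \<le> s powr 1" using that q by (intro powr_mono') auto
      then show ?thesis using that by simp
    qed
    then have "(s * c) powr q \<le> s * c powr q" if "0 \<le> s" "s \<le> 1" "c \<ge> 0" for s c :: real
      using that by (simp add: powr_mult mult_right_mono)
    then show ?thesis
      using True t ab by auto
  next
    case False
    then show ?thesis
      using convex_onD[OF powr_convex[OF q], of t a b] t ab by auto
  qed
  from 1 2 show "\<bar>(1 - t) *\<^sub>R x + t *\<^sub>R y\<bar> powr q \<le> (1 - t) * \<bar>x\<bar> powr q + t * \<bar>y\<bar> powr q"
    unfolding a_def b_def by linarith
qed simp

text \<open>All Poisson expectations below exist for convex functions of linear growth on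
  \<open>[0, \<infinity>)\<close>; the general case is reduced to this one by \<open>chord_max\<close>.\<close>

definition linear_growth :: "(real \<Rightarrow> real) \<Rightarrow> bool" where
  "linear_growth \<psi> \<longleftrightarrow> (\<exists>a b. \<forall>x\<ge>0. \<bar>\<psi> x\<bar> \<le> a + b * x)"

lemma linear_growthE:
  assumes "linear_growth \<psi>"
  obtains a b where "\<And>x. x \<ge> 0 \<Longrightarrow> \<bar>\<psi> x\<bar> \<le> a + b * x" "b \<ge> 0"
proof -
  obtain a b where ab: "\<And>x. x \<ge> 0 \<Longrightarrow> \<bar>\<psi> x\<bar> \<le> a + b * x"
    using assms unfolding linear_growth_def by blast
  show ?thesis
  proof (rule that)
    fix x :: real assume "x \<ge> 0"
    then show "\<bar>\<psi> x\<bar> \<le> a + \<bar>b\<bar> * x"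
      using ab[of x] mult_right_mono[OF abs_ge_self, of x b] by linarith
  qed simp
qed

lemma linear_growth_affine_comp:
  assumes "linear_growth \<psi>" "c \<ge> 0" "s \<ge> 0"
  shows "linear_growth (\<lambda>x. \<psi> (c + s * x))"
proof -
  obtain a b where ab: "\<And>x. x \<ge> 0 \<Longrightarrow> \<bar>\<psi> x\<bar> \<le> a + b * x"
    using assms(1) linear_growthE by blast
  have "\<bar>\<psi> (c + s * x)\<bar> \<le> (a + b * c) + (b * s) * x" if "x \<ge> 0" for x
    using ab[of "c + s * x"] assms that by (simp add: algebra_simps)
  then show ?thesis unfolding linear_growth_def by blast
qed

lemma linear_growth_nat_bound:
  assumes "linear_growth \<psi>" "c \<ge> 0" "s \<ge> 0"
  obtains C D where "\<And>k :: nat. \<bar>\<psi> (c + s * real k)\<bar> \<le> C + D * real k"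
proof -
  obtain a b where "\<And>x. x \<ge> 0 \<Longrightarrow> \<bar>\<psi> (c + s * x)\<bar> \<le> a + b * x"
    using linear_growth_affine_comp[OF assms] unfolding linear_growth_def by blast
  then show ?thesis using that[of a b] by simp
qed

definition chord_line :: "(real \<Rightarrow> real) \<Rightarrow> nat \<Rightarrow> real \<Rightarrow> real" where
  "chord_line \<phi> j x = \<phi> (real j) + (\<phi> (real j + 1) - \<phi> (real j)) * (x - real j)"

definition chord_max :: "(real \<Rightarrow> real) \<Rightarrow> nat \<Rightarrow> real \<Rightarrow> real" where
  "chord_max \<phi> n x = Max ((\<lambda>j. chord_line \<phi> j x) ` {..n})"

lemma chord_max_attained: "\<exists>j\<le>n. chord_max \<phi> n x = chord_line \<phi> j x"
proof -
  have "chord_max \<phi> n x \<in> (\<lambda>j. chord_line \<phi> j x) ` {..n}"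
    unfolding chord_max_def by (rule Max_in) auto
  then show ?thesis by auto
qed

lemma chord_line_le_chord_max: "j \<le> n \<Longrightarrow> chord_line \<phi> j x \<le> chord_max \<phi> n x"
  unfolding chord_max_def by (rule Max_ge) auto

lemma convex_chord_max: "convex_on UNIV (chord_max \<phi> n)"
proof (rule convex_onI)
  fix t x y :: real assume t: "0 < t" "t < 1"
  obtain j where j: "j \<le> n" "chord_max \<phi> n ((1 - t) *\<^sub>R x + t *\<^sub>R y) = chord_line \<phi> j ((1 - t) *\<^sub>R x + t *\<^sub>R y)"
    using chord_max_attained by blast
  have "chord_line \<phi> j ((1 - t) *\<^sub>R x + t *\<^sub>R y) = (1 - t) * chord_line \<phi> j x + t * chord_line \<phi> j y"
    unfolding chord_line_def by (simp add: algebra_simps)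
  also have "\<dots> \<le> (1 - t) * chord_max \<phi> n x + t * chord_max \<phi> n y"
    using t chord_line_le_chord_max[OF j(1)] by (intro add_mono mult_left_mono) auto
  finally show "chord_max \<phi> n ((1 - t) *\<^sub>R x + t *\<^sub>R y) \<le> (1 - t) * chord_max \<phi> n x + t * chord_max \<phi> n y"
    using j(2) by simp
qed simp

lemma linear_growth_chord_max: "linear_growth (chord_max \<phi> n)"
proof -
  define c where "c j = \<bar>\<phi> (real j)\<bar> + \<bar>\<phi> (real j + 1) - \<phi> (real j)\<bar> * real j" for j
  define e where "e j = \<bar>\<phi> (real j + 1) - \<phi> (real j)\<bar>" for j
  have chord_bound: "\<bar>chord_line \<phi> j x\<bar> \<le> c j + e j * x" if "x \<ge> 0" for j x
  proof -
    have "\<bar>chord_line \<phi> j x\<bar> \<le> \<bar>\<phi> (real j)\<bar> + e j * \<bar>x - real j\<bar>"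
      unfolding chord_line_def e_def by (metis abs_mult abs_triangle_ineq)
    also have "e j * \<bar>x - real j\<bar> \<le> e j * (x + real j)"
      using that by (intro mult_left_mono) (auto simp: e_def)
    finally show ?thesis unfolding c_def e_def by (simp add: algebra_simps)
  qed
  have "\<bar>chord_max \<phi> n x\<bar> \<le> (\<Sum>j\<le>n. c j) + (\<Sum>j\<le>n. e j) * x" if x: "x \<ge> 0" for x
  proof -
    obtain j where j: "j \<le> n" "chord_max \<phi> n x = chord_line \<phi> j x"
      using chord_max_attained by blast
    have "\<bar>chord_max \<phi> n x\<bar> \<le> c j + e j * x" using j chord_bound[OF x] by simp
    also have "\<dots> \<le> (\<Sum>j\<le>n. c j + e j * x)"
      using j x by (intro member_le_sum) (auto simp: c_def e_def)
    also have "\<dots> = (\<Sum>j\<le>n. c j) + (\<Sum>j\<le>n. e j) * x"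
      by (simp add: sum.distrib sum_distrib_right)
    finally show ?thesis .
  qed
  then show ?thesis unfolding linear_growth_def by blast
qed

lemma chord_max_le:
  assumes "convex_on UNIV \<phi>"
  shows "chord_max \<phi> n (real m) \<le> \<phi> (real m)"
proof -
  have "chord_line \<phi> j (real m) \<le> \<phi> (real m)" for j
  proof -
    have "real m \<le> real j \<or> real j + 1 \<le> real m" by (cases "m \<le> j") auto
    then show ?thesis
      unfolding chord_line_def using convex_on_unit_chord_le[OF assms] by blast
  qed
  then show ?thesis using chord_max_attained[of n \<phi> "real m"] by force
qed

lemma chord_max_eq:
  assumes "convex_on UNIV \<phi>" and "k \<le> n"
  shows "chord_max \<phi> n (real k) = \<phi> (real k)"
  using chord_line_le_chord_max[OF assms(2), of \<phi> "real k"] chord_max_le[OF assms(1), of n k]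
  by (simp add: chord_line_def)

section \<open>Poisson distributions with nonnegative rate\<close>

text \<open>\<open>poisson_pmf\<close> is only meaningful for a positive rate; rate \<open>0\<close> is the point mass
  at \<open>0\<close>, and negative rates are junk.\<close>

definition poisson_dist :: "real \<Rightarrow> nat pmf" where
  "poisson_dist a = (if a \<le> 0 then return_pmf 0 else poisson_pmf a)"

abbreviation E_pois :: "real \<Rightarrow> (nat \<Rightarrow> real) \<Rightarrow> real" where
  "E_pois a f \<equiv> measure_pmf.expectation (poisson_dist a) f"

lemma poisson_dist_0: "poisson_dist 0 = return_pmf 0"
  by (simp add: poisson_dist_def)

lemma poisson_dist_1 [simp]: "poisson_dist 1 = poisson_pmf 1"
  by (simp add: poisson_dist_def)

lemma pmf_poisson_dist: "a \<ge> 0 \<Longrightarrow> pmf (poisson_dist a) k = a ^ k / fact k * exp (-a)"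
  by (auto simp: poisson_dist_def indicator_def)

lemma integrable_poisson_dist_exp_bound:
  fixes f :: "nat \<Rightarrow> real"
  assumes a: "a \<ge> 0" and f: "\<And>k. \<bar>f k\<bar> \<le> C * x ^ k"
  shows "integrable (measure_pmf (poisson_dist a)) f"
proof -
  have S: "summable (\<lambda>k. exp (-a) * C * (inverse (fact k) * (a * x) ^ k))"
    by (intro summable_mult summable_exp)
  have "summable (\<lambda>k. norm (pmf (poisson_dist a) k *\<^sub>R f k))"
  proof (rule summable_comparison_test'[OF S, where N=0])
    fix k :: nat
    have "norm (pmf (poisson_dist a) k *\<^sub>R f k) = a ^ k / fact k * exp (-a) * \<bar>f k\<bar>"
      using a by (simp add: abs_mult pmf_poisson_dist)
    also have "\<dots> \<le> a ^ k / fact k * exp (-a) * (C * x ^ k)"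
      using a by (intro mult_left_mono f) auto
    also have "\<dots> = exp (-a) * C * (inverse (fact k) * (a * x) ^ k)"
      by (simp add: field_simps power_mult_distrib)
    finally show "norm (norm (pmf (poisson_dist a) k *\<^sub>R f k))
        \<le> exp (-a) * C * (inverse (fact k) * (a * x) ^ k)" by simp
  qed
  then show ?thesis
    unfolding measure_pmf_eq_density
    by (subst integrable_density) (auto simp: integrable_count_space_nat_iff)
qed

lemma integrable_poisson_dist_linear_bound:
  fixes f :: "nat \<Rightarrow> real"
  assumes a: "a \<ge> 0" and f: "\<And>k. \<bar>f k\<bar> \<le> c + d * real k"
  shows "integrable (measure_pmf (poisson_dist a)) f"
proof (rule integrable_poisson_dist_exp_bound[OF a, where C="\<bar>c\<bar> + \<bar>d\<bar>" and x=2])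
  fix k :: nat
  have "\<bar>f k\<bar> \<le> \<bar>c\<bar> + \<bar>d\<bar> * real k"
    using f[of k] mult_right_mono[OF abs_ge_self, of "real k" d] by linarith
  also have "\<dots> \<le> \<bar>c\<bar> + \<bar>d\<bar> * 2 ^ k"
    using of_nat_less_two_power[of k] by (intro add_left_mono mult_left_mono) auto
  also have "\<dots> \<le> (\<bar>c\<bar> + \<bar>d\<bar>) * 2 ^ k"
    using mult_left_mono[of 1 "(2::real) ^ k" "\<bar>c\<bar>"] by (simp add: distrib_right)
  finally show "\<bar>f k\<bar> \<le> (\<bar>c\<bar> + \<bar>d\<bar>) * 2 ^ k" .
qed

lemma integrable_poisson_dist_real: "a \<ge> 0 \<Longrightarrow> integrable (measure_pmf (poisson_dist a)) real"
  by (rule integrable_poisson_dist_linear_bound[where c=0 and d=1]) simp_all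

lemma integrable_poisson_dist_linear_growth:
  assumes "linear_growth \<psi>" "a \<ge> 0" "c \<ge> 0" "s \<ge> 0"
  shows "integrable (measure_pmf (poisson_dist a)) (\<lambda>k. \<psi> (c + s * real k))"
  using linear_growth_nat_bound[OF assms(1,3,4)] integrable_poisson_dist_linear_bound[OF assms(2)]
  by metis

lemma integrable_poisson_dist_powr:
  assumes a: "a \<ge> 0" and q: "q \<ge> 0"
  shows "integrable (measure_pmf (poisson_dist a)) (\<lambda>k. real k powr q)"
proof (rule integrable_poisson_dist_exp_bound[OF a, where C=1 and x="2 ^ nat \<lceil>q\<rceil>"])
  fix k :: nat
  define J where "J = nat \<lceil>q\<rceil>"
  have "real k powr q \<le> (2 ^ J) ^ k"
  proof (cases "k = 0")
    case False
    have "real k powr q \<le> real k powr real J"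
      using False q by (intro powr_mono) (auto simp: J_def)
    also have "\<dots> = real k ^ J" using False by (simp add: powr_realpow)
    also have "\<dots> \<le> (2 ^ k) ^ J"
      using of_nat_less_two_power[of k] by (intro power_mono) auto
    finally show ?thesis by (simp add: power_mult[symmetric] mult.commute)
  qed simp
  then show "\<bar>real k powr q\<bar> \<le> 1 * (2 ^ nat \<lceil>q\<rceil>) ^ k" by (simp add: J_def)
qed

lemma E_pois_real:
  assumes a: "a \<ge> 0"
  shows "E_pois a real = a"
proof -
  have "(\<lambda>k. a ^ k /\<^sub>R fact k) sums exp a" by (rule exp_converges)
  then have "(\<lambda>k. (a * exp (-a)) * (a ^ k * inverse (fact k))) sums ((a * exp (-a)) * exp a)"
    by (intro sums_mult) (simp add: scaleR_conv_of_real divide_inverse mult.commute)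
  moreover have "(a * exp (-a)) * exp a = a"
    by (simp add: mult.assoc flip: exp_add)
  moreover have "a ^ Suc k / fact (Suc k) * exp (-a) * real (Suc k)
      = (a * exp (-a)) * (a ^ k * inverse (fact k))" for k
  proof -
    have "real (Suc k) / fact (Suc k) = 1 / fact k"
      by (simp add: fact_Suc del: of_nat_Suc)
    then show ?thesis by (simp add: divide_inverse mult_ac)
  qed
  ultimately have "(\<lambda>k. a ^ Suc k / fact (Suc k) * exp (-a) * real (Suc k)) sums a"
    by simp
  then have sums: "(\<lambda>k. a ^ k / fact k * exp (-a) * real k) sums a"
    using sums_Suc_iff[of "\<lambda>k. a ^ k / fact k * exp (-a) * real k" a] by simp
  have "E_pois a real = (\<integral>k. a ^ k / fact k * exp (-a) * real k \<partial>count_space UNIV)"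
    unfolding measure_pmf_eq_density using a by (subst integral_density) (auto simp: pmf_poisson_dist)
  also have "\<dots> = a"
    using sums a by (subst integral_count_space_nat)
      (simp_all add: sums_iff integrable_count_space_nat_iff abs_mult)
  finally show ?thesis .
qed

lemma E_pois_affine: "a \<ge> 0 \<Longrightarrow> E_pois a (\<lambda>k. c + d * real k) = c + d * a"
  using integrable_poisson_dist_real[of a] E_pois_real[of a]
  by (simp add: Bochner_Integration.integral_add)

lemma pmf_poisson_dist_le_thinned:
  assumes th: "0 \<le> \<theta>" "\<theta> \<le> 1" and j: "2 \<le> j"
  shows "pmf (poisson_dist \<theta>) j \<le> \<theta> * pmf (poisson_dist 1) j"
proof -
  have "\<theta> \<le> exp (\<theta> - 1)"
    using exp_ge_add_one_self[of "\<theta> - 1"] by simp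
  then have exp: "\<theta> * exp (-\<theta>) \<le> exp (-1)"
    by (simp add: exp_diff exp_minus field_simps)
  have "\<theta> ^ j * exp (-\<theta>) \<le> \<theta> ^ 2 * exp (-\<theta>)"
    using th j by (intro mult_right_mono power_decreasing) auto
  also have "\<dots> = \<theta> * (\<theta> * exp (-\<theta>))" by (simp add: power2_eq_square)
  also have "\<dots> \<le> \<theta> * exp (-1)" using exp th by (intro mult_left_mono) auto
  finally have "\<theta> ^ j * exp (-\<theta>) / fact j \<le> \<theta> * exp (-1) / fact j"
    by (intro divide_right_mono) auto
  then show ?thesis using th by (simp add: pmf_poisson_dist)
qed

lemma expectation_bind_pmf_nonneg:
  fixes f :: "'b \<Rightarrow> real"
  assumes nonneg: "\<And>y. f y \<ge> 0" and inner: "\<And>x. integrable (measure_pmf (N x)) f"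
    and outer: "integrable (measure_pmf M) (\<lambda>x. measure_pmf.expectation (N x) f)"
  shows "measure_pmf.expectation (bind_pmf M N) f
    = measure_pmf.expectation M (\<lambda>x. measure_pmf.expectation (N x) f)"
proof -
  have "(\<integral>\<^sup>+y. ennreal (f y) \<partial>N x) = ennreal (measure_pmf.expectation (N x) f)" for x
    using inner nonneg by (intro nn_integral_eq_integral) auto
  moreover have "(\<integral>\<^sup>+x. ennreal (measure_pmf.expectation (N x) f) \<partial>M)
      = ennreal (measure_pmf.expectation M (\<lambda>x. measure_pmf.expectation (N x) f))"
    using outer nonneg by (intro nn_integral_eq_integral) (auto intro!: integral_nonneg_AE)
  ultimately have nn: "(\<integral>\<^sup>+y. ennreal (f y) \<partial>bind_pmf M N)
      = ennreal (measure_pmf.expectation M (\<lambda>x. measure_pmf.expectation (N x) f))"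
    by simp
  have "measure_pmf.expectation (bind_pmf M N) f = enn2real (\<integral>\<^sup>+y. ennreal (f y) \<partial>bind_pmf M N)"
    by (rule integral_eq_nn_integral) (auto simp: nonneg)
  also have "\<dots> = measure_pmf.expectation M (\<lambda>x. measure_pmf.expectation (N x) f)"
    using nn nonneg by (simp add: integral_nonneg_AE)
  finally show ?thesis .
qed

lemma pmf_map_pmf_add:
  fixes i n :: nat
  shows "pmf (map_pmf (\<lambda>j. i + j) q) n = (if i \<le> n then pmf q (n - i) else 0)"
proof (cases "i \<le> n")
  case True
  then have "pmf (map_pmf (\<lambda>j. i + j) q) n = pmf (map_pmf (\<lambda>j. i + j) q) (i + (n - i))"
    by simp
  also have "\<dots> = pmf q (n - i)"
    by (rule pmf_map_inj') (auto simp: inj_def)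
  finally show ?thesis using True by simp
next
  case False
  then have "n \<notin> set_pmf (map_pmf (\<lambda>j. i + j) q)" by auto
  then show ?thesis using False by (simp add: pmf_eq_0_set_pmf)
qed

lemma bind_poisson_dist_add:
  assumes a: "a \<ge> 0" and b: "b \<ge> 0"
  shows "bind_pmf (poisson_dist a) (\<lambda>i. map_pmf (\<lambda>j. i + j) (poisson_dist b)) = poisson_dist (a + b)"
proof (rule pmf_eqI)
  fix n :: nat
  have "pmf (bind_pmf (poisson_dist a) (\<lambda>i. map_pmf (\<lambda>j. i + j) (poisson_dist b))) n
      = E_pois a (\<lambda>i. if i \<le> n then pmf (poisson_dist b) (n - i) else 0)"
    by (simp add: pmf_bind pmf_map_pmf_add)
  also have "\<dots> = (\<Sum>i\<le>n. pmf (poisson_dist a) i *\<^sub>R (if i \<le> n then pmf (poisson_dist b) (n - i) else 0))"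
    by (rule integral_measure_pmf) (auto split: if_splits)
  also have "\<dots> = (\<Sum>i\<le>n. a ^ i / fact i * exp (-a) * (b ^ (n - i) / fact (n - i) * exp (-b)))"
    using a b by (intro sum.cong) (auto simp: pmf_poisson_dist)
  also have "\<dots> = (\<Sum>i\<le>n. exp (-(a + b)) / fact n * (of_nat (n choose i) * a ^ i * b ^ (n - i)))"
  proof (intro sum.cong refl)
    fix i assume "i \<in> {..n}"
    then have "(of_nat (n choose i) :: real) = fact n / (fact i * fact (n - i))"
      by (intro binomial_fact) simp
    moreover have "exp (-(a + b)) = exp (-a) * exp (-b)"
      by (simp flip: exp_add)
    ultimately show "a ^ i / fact i * exp (-a) * (b ^ (n - i) / fact (n - i) * exp (-b))
        = exp (-(a + b)) / fact n * (of_nat (n choose i) * a ^ i * b ^ (n - i))"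
      by simp
  qed
  also have "\<dots> = exp (-(a + b)) / fact n * (a + b) ^ n"
    by (simp add: binomial_ring sum_distrib_left)
  also have "\<dots> = pmf (poisson_dist (a + b)) n"
    using a b by (simp add: pmf_poisson_dist)
  finally show "pmf (bind_pmf (poisson_dist a) (\<lambda>i. map_pmf (\<lambda>j. i + j) (poisson_dist b))) n
      = pmf (poisson_dist (a + b)) n" .
qed

lemma integrable_E_pois_E_pois:
  fixes g :: "nat \<Rightarrow> nat \<Rightarrow> real"
  assumes a: "a \<ge> 0" and b: "b \<ge> 0" and g: "\<And>i j. \<bar>g i j\<bar> \<le> c + d * real i + e * real j"
  shows "integrable (measure_pmf (poisson_dist a)) (\<lambda>i. E_pois b (g i))"
proof (rule integrable_poisson_dist_linear_bound[OF a, where c="c + e * b" and d=d])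
  fix i :: nat
  have "\<bar>E_pois b (g i)\<bar> \<le> E_pois b (\<lambda>j. \<bar>g i j\<bar>)"
    by (rule integral_abs_bound)
  also have "\<dots> \<le> E_pois b (\<lambda>j. (c + d * real i) + e * real j)"
  proof (rule integral_mono)
    show "integrable (measure_pmf (poisson_dist b)) (\<lambda>j. \<bar>g i j\<bar>)"
      using g[of i] by (intro integrable_poisson_dist_linear_bound[OF b, where c="c + d * real i" and d=e]) simp
    show "integrable (measure_pmf (poisson_dist b)) (\<lambda>j. (c + d * real i) + e * real j)"
      using integrable_poisson_dist_real[OF b] by simp
  qed (use g in simp)
  also have "\<dots> = c + e * b + d * real i"
    using b by (simp add: E_pois_affine)
  finally show "\<bar>E_pois b (g i)\<bar> \<le> c + e * b + d * real i" .
qed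

lemma E_pois_add_nonneg:
  fixes f :: "nat \<Rightarrow> real"
  assumes a: "a \<ge> 0" and b: "b \<ge> 0" and nonneg: "\<And>k. f k \<ge> 0"
    and f: "\<And>k. \<bar>f k\<bar> \<le> c + d * real k"
  shows "E_pois (a + b) f = E_pois a (\<lambda>i. E_pois b (\<lambda>j. f (i + j)))"
proof -
  have f': "\<bar>f (i + j)\<bar> \<le> c + d * real i + d * real j" for i j
    using f[of "i + j"] by (simp add: algebra_simps)
  have "E_pois (a + b) f
      = measure_pmf.expectation (bind_pmf (poisson_dist a) (\<lambda>i. map_pmf (\<lambda>j. i + j) (poisson_dist b))) f"
    by (simp add: bind_poisson_dist_add[OF a b])
  also have "\<dots> = E_pois a (\<lambda>i. E_pois b (\<lambda>j. f (i + j)))"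
    using integrable_E_pois_E_pois[OF a b f'] f'
    by (subst expectation_bind_pmf_nonneg[OF nonneg])
      (auto intro!: integrable_poisson_dist_linear_bound[OF b])
  finally show ?thesis .
qed

text \<open>For a general \<open>f\<close>, apply the nonnegative case to \<open>f + h\<close> and to \<open>h\<close>, where \<open>h\<close>
  is the linear bound of \<open>\<bar>f\<bar>\<close>.\<close>

lemma E_pois_add:
  fixes f :: "nat \<Rightarrow> real"
  assumes a: "a \<ge> 0" and b: "b \<ge> 0" and f: "\<And>k. \<bar>f k\<bar> \<le> c + d * real k"
  shows "E_pois (a + b) f = E_pois a (\<lambda>i. E_pois b (\<lambda>j. f (i + j)))"
proof -
  define h where "h k = c + d * real k" for k :: nat
  have h: "\<bar>h k\<bar> \<le> c + d * real k" "h k \<ge> 0" for k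
    using f[of k] unfolding h_def by auto
  have fh: "\<bar>f k + h k\<bar> \<le> 2 * c + 2 * d * real k" "f k + h k \<ge> 0" for k
    using f[of k] h[of k] unfolding h_def by auto
  have ab: "a + b \<ge> 0" using a b by simp
  have shift: "\<bar>g (i + j)\<bar> \<le> c + d * real i + d * real j"
    if "\<And>k. \<bar>g k\<bar> \<le> c + d * real k" for g :: "nat \<Rightarrow> real" and i j
    using that[of "i + j"] by (simp add: algebra_simps)
  have int_shift: "integrable (measure_pmf (poisson_dist b)) (\<lambda>j. g (i + j))"
    if "\<And>k. \<bar>g k\<bar> \<le> c + d * real k" for g i
    using shift[OF that, of i]
    by (intro integrable_poisson_dist_linear_bound[OF b, where c="c + d * real i" and d=d]) simp
  have int_outer: "integrable (measure_pmf (poisson_dist a)) (\<lambda>i. E_pois b (\<lambda>j. g (i + j)))"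
    if "\<And>k. \<bar>g k\<bar> \<le> c + d * real k" for g
    using shift[OF that] by (rule integrable_E_pois_E_pois[OF a b])
  have "E_pois (a + b) f + E_pois (a + b) h = E_pois (a + b) (\<lambda>k. f k + h k)"
    using integrable_poisson_dist_linear_bound[OF ab f] integrable_poisson_dist_linear_bound[OF ab h(1)]
    by (simp add: Bochner_Integration.integral_add)
  also have "\<dots> = E_pois a (\<lambda>i. E_pois b (\<lambda>j. f (i + j) + h (i + j)))"
    by (rule E_pois_add_nonneg[OF a b fh(2) fh(1)])
  also have "\<dots> = E_pois a (\<lambda>i. E_pois b (\<lambda>j. f (i + j)) + E_pois b (\<lambda>j. h (i + j)))"
    using int_shift[OF f] int_shift[OF h(1)] by (simp add: Bochner_Integration.integral_add)
  also have "\<dots> = E_pois a (\<lambda>i. E_pois b (\<lambda>j. f (i + j))) + E_pois a (\<lambda>i. E_pois b (\<lambda>j. h (i + j)))"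
    using int_outer[OF f] int_outer[OF h(1)] by (rule Bochner_Integration.integral_add)
  also have "E_pois a (\<lambda>i. E_pois b (\<lambda>j. h (i + j))) = E_pois (a + b) h"
    by (rule E_pois_add_nonneg[OF a b h(2) h(1), symmetric])
  finally show ?thesis by simp
qed

section \<open>The Poisson transform of a convex function\<close>

definition poisson_transform :: "(real \<Rightarrow> real) \<Rightarrow> real \<Rightarrow> real" where
  "poisson_transform \<psi> a = E_pois a (\<lambda>j. \<psi> (real j))"

definition bernoulli_shift :: "real \<Rightarrow> (real \<Rightarrow> real) \<Rightarrow> real \<Rightarrow> real" where
  "bernoulli_shift p \<psi> x = (1 - p) * \<psi> x + p * \<psi> (x + 1)"

definition scaled_poisson :: "(real \<Rightarrow> real) \<Rightarrow> real \<Rightarrow> real" where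
  "scaled_poisson \<psi> s = E_pois 1 (\<lambda>k. \<psi> (s * real k))"

definition scaled_poisson_interp :: "(real \<Rightarrow> real) \<Rightarrow> real \<Rightarrow> real" where
  "scaled_poisson_interp \<psi> l =
     (1 - frac l) * scaled_poisson \<psi> \<lfloor>l\<rfloor> + frac l * scaled_poisson \<psi> (\<lfloor>l\<rfloor> + 1)"

lemma convex_bernoulli_shift:
  assumes "convex_on UNIV \<psi>" "0 \<le> p" "p \<le> 1"
  shows "convex_on UNIV (bernoulli_shift p \<psi>)"
proof -
  have "convex_on UNIV (\<lambda>x. \<psi> (x + 1))"
    using convex_on_affine_comp[OF assms(1), of 1 1] by (simp add: add.commute)
  then show ?thesis
    unfolding bernoulli_shift_def[abs_def] using assms by (intro convex_on_add convex_on_cmul) auto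
qed

lemma linear_growth_bernoulli_shift:
  assumes "linear_growth \<psi>" "0 \<le> p" "p \<le> 1"
  shows "linear_growth (bernoulli_shift p \<psi>)"
proof -
  obtain a b where ab: "\<And>x. x \<ge> 0 \<Longrightarrow> \<bar>\<psi> x\<bar> \<le> a + b * x" and "b \<ge> 0"
    using assms(1) linear_growthE by blast
  have "\<bar>bernoulli_shift p \<psi> x\<bar> \<le> (a + b) + b * x" if x: "x \<ge> 0" for x
  proof -
    have "\<bar>bernoulli_shift p \<psi> x\<bar> \<le> \<bar>(1 - p) * \<psi> x\<bar> + \<bar>p * \<psi> (x + 1)\<bar>"
      unfolding bernoulli_shift_def by (rule abs_triangle_ineq)
    also have "\<dots> = (1 - p) * \<bar>\<psi> x\<bar> + p * \<bar>\<psi> (x + 1)\<bar>"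
      using assms by (simp add: abs_mult)
    also have "\<dots> \<le> (1 - p) * (a + b * x) + p * (a + b * (x + 1))"
      using assms x ab[of x] ab[of "x + 1"] by (intro add_mono mult_left_mono) auto
    also have "\<dots> \<le> (a + b) + b * x"
      using assms \<open>b \<ge> 0\<close> mult_left_le_one_le[of b p] by (simp add: algebra_simps)
    finally show ?thesis .
  qed
  then show ?thesis unfolding linear_growth_def by blast
qed

lemma integrable_E_pois_linear_growth:
  assumes "linear_growth \<psi>" "a \<ge> 0" "b \<ge> 0" "s \<ge> 0"
  shows "integrable (measure_pmf (poisson_dist a)) (\<lambda>i. E_pois b (\<lambda>k. \<psi> (real i + s * real k)))"
proof -
  obtain A B where AB: "\<And>x. x \<ge> 0 \<Longrightarrow> \<bar>\<psi> x\<bar> \<le> A + B * x"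
    using assms(1) linear_growthE by blast
  have "\<bar>\<psi> (real i + s * real k)\<bar> \<le> A + B * real i + (B * s) * real k" for i k :: nat
    using AB[of "real i + s * real k"] assms(4) by (simp add: algebra_simps)
  then show ?thesis
    by (rule integrable_E_pois_E_pois[OF assms(2,3)])
qed

lemma poisson_transform_add:
  assumes "linear_growth \<psi>" "a \<ge> 0" "b \<ge> 0"
  shows "poisson_transform \<psi> (a + b) = E_pois a (\<lambda>i. E_pois b (\<lambda>j. \<psi> (real i + real j)))"
proof -
  obtain C D where bound: "\<And>k. \<bar>\<psi> (real k)\<bar> \<le> C + D * real k"
    using linear_growth_nat_bound[OF assms(1), of 0 1] by auto
  show ?thesis
    unfolding poisson_transform_def using E_pois_add[OF assms(2,3) bound] by simp
qed

text \<open>Adding an independent Bernoulli variable of mean \<open>p\<close> is dominated in the convex order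
  by adding an independent Poisson variable of mean \<open>p\<close>: both are supported on \<open>\<nat>\<close> with the same
  mean, and the Bernoulli law is the linear interpolation of the Poisson one on \<open>{0, 1}\<close>.\<close>

lemma poisson_transform_bernoulli_shift_le:
  assumes cv: "convex_on UNIV \<psi>" and lg: "linear_growth \<psi>" and a: "a \<ge> 0"
    and p: "0 \<le> p" "p \<le> 1"
  shows "poisson_transform (bernoulli_shift p \<psi>) a \<le> poisson_transform \<psi> (a + p)"
proof -
  have "bernoulli_shift p \<psi> (real i) \<le> E_pois p (\<lambda>j. \<psi> (real i + real j))" for i :: nat
  proof -
    have "bernoulli_shift p \<psi> (real i)
        = E_pois p (\<lambda>j. \<psi> (real i) + (\<psi> (real i + 1) - \<psi> (real i)) * real j)"
      unfolding E_pois_affine[OF p(1)] by (simp add: bernoulli_shift_def algebra_simps)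
    also have "\<dots> \<le> E_pois p (\<lambda>j. \<psi> (real i + real j))"
    proof (rule integral_mono)
      show "integrable (measure_pmf (poisson_dist p)) (\<lambda>j. \<psi> (real i + real j))"
        using integrable_poisson_dist_linear_growth[OF lg p(1), of "real i" 1] by simp
      show "\<psi> (real i) + (\<psi> (real i + 1) - \<psi> (real i)) * real j \<le> \<psi> (real i + real j)" for j
        using convex_on_unit_chord_le[OF cv, of "real i + real j" "real i"] by (cases j) auto
    qed (use integrable_poisson_dist_real[OF p(1)] in auto)
    finally show ?thesis .
  qed
  then have "poisson_transform (bernoulli_shift p \<psi>) a \<le> E_pois a (\<lambda>i. E_pois p (\<lambda>j. \<psi> (real i + real j)))"
    unfolding poisson_transform_def
    using integrable_poisson_dist_linear_growth[OF linear_growth_bernoulli_shift[OF lg p] a, of 0 1]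
      integrable_E_pois_linear_growth[OF lg a p(1), of 1]
    by (intro integral_mono) auto
  also have "\<dots> = poisson_transform \<psi> (a + p)"
    using poisson_transform_add[OF lg a p(1)] by simp
  finally show ?thesis .
qed

text \<open>Subtracting the chord through \<open>0\<close> and \<open>1\<close> leaves a nonnegative function vanishing on
  \<open>{0, 1}\<close>, and for \<open>j \<ge> 2\<close> the Poisson(\<open>\<theta>\<close>) weights are at most \<open>\<theta>\<close> times the
  Poisson(1) weights.\<close>

lemma poisson_transform_le_chord:
  assumes cv: "convex_on UNIV \<phi>" and lg: "linear_growth \<phi>" and th: "0 \<le> \<theta>" "\<theta> \<le> 1"
  shows "poisson_transform \<phi> \<theta> \<le> (1 - \<theta>) * \<phi> 0 + \<theta> * poisson_transform \<phi> 1"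
proof -
  define \<Delta> where "\<Delta> = \<phi> 1 - \<phi> 0"
  define r where "r j = \<phi> (real j) - \<phi> 0 - \<Delta> * real j" for j :: nat
  have r_nonneg: "r j \<ge> 0" for j
    using convex_on_unit_chord_le[OF cv, of "real j" 0] unfolding r_def \<Delta>_def by (cases j) auto
  have r_01: "r j = 0" if "j \<le> 1" for j
    using that unfolding r_def \<Delta>_def by (cases j) auto
  have int_r: "integrable (measure_pmf (poisson_dist x)) r" if "x \<ge> 0" for x
    unfolding r_def[abs_def]
    using integrable_poisson_dist_linear_growth[OF lg that, of 0 1] integrable_poisson_dist_real[OF that]
    by auto
  have decomp: "poisson_transform \<phi> x = \<phi> 0 + \<Delta> * x + E_pois x r" if x: "x \<ge> 0" for x
  proof -
    have "poisson_transform \<phi> x = E_pois x (\<lambda>j. (\<phi> 0 + \<Delta> * real j) + r j)"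
      unfolding poisson_transform_def r_def by simp
    also have "\<dots> = E_pois x (\<lambda>j. \<phi> 0 + \<Delta> * real j) + E_pois x r"
      using int_r[OF x] integrable_poisson_dist_real[OF x]
      by (intro Bochner_Integration.integral_add) auto
    finally show ?thesis
      using x by (simp add: E_pois_affine)
  qed
  have int_density: "integrable (count_space UNIV) (\<lambda>j. pmf (poisson_dist x) j * r j)" if "x \<ge> 0" for x
    using int_r[OF that] unfolding measure_pmf_eq_density by (subst (asm) integrable_density) auto
  have "E_pois \<theta> r = (\<integral>j. pmf (poisson_dist \<theta>) j * r j \<partial>count_space UNIV)"
    unfolding measure_pmf_eq_density by (subst integral_density) auto
  also have "\<dots> \<le> (\<integral>j. \<theta> * (pmf (poisson_dist 1) j * r j) \<partial>count_space UNIV)"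
  proof (rule integral_mono)
    show "integrable (count_space UNIV) (\<lambda>j. pmf (poisson_dist \<theta>) j * r j)"
      and "integrable (count_space UNIV) (\<lambda>j. \<theta> * (pmf (poisson_dist 1) j * r j))"
      using int_density[OF th(1)] integrable_mult_right[OF int_density[OF zero_le_one]] by simp_all
    show "pmf (poisson_dist \<theta>) j * r j \<le> \<theta> * (pmf (poisson_dist 1) j * r j)" for j
      using r_01[of j] mult_right_mono[OF pmf_poisson_dist_le_thinned[OF th] r_nonneg, of j]
      by (cases "j \<le> 1") (auto simp: mult.assoc)
  qed
  also have "\<dots> = \<theta> * (\<integral>j. pmf (poisson_dist 1) j * r j \<partial>count_space UNIV)"
    by (rule integral_mult_right_zero)
  also have "\<dots> = \<theta> * E_pois 1 r"
    unfolding measure_pmf_eq_density by (subst integral_density) auto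
  finally have "E_pois \<theta> r \<le> \<theta> * E_pois 1 r" .
  then show ?thesis
    unfolding decomp[OF th(1)] decomp[of 1, simplified] by (simp add: algebra_simps)
qed

lemma poisson_transform_le_interp:
  assumes cv: "convex_on UNIV \<psi>" and lg: "linear_growth \<psi>" and k: "k \<ge> 0"
    and th: "0 \<le> \<theta>" "\<theta> \<le> 1"
  shows "poisson_transform \<psi> (k + \<theta>) \<le> (1 - \<theta>) * poisson_transform \<psi> k + \<theta> * poisson_transform \<psi> (k + 1)"
proof -
  have int1: "integrable (measure_pmf (poisson_dist k)) (\<lambda>i. E_pois 1 (\<lambda>j. \<psi> (real i + real j)))"
    using integrable_E_pois_linear_growth[OF lg k, of 1 1] by simp
  have int0: "integrable (measure_pmf (poisson_dist k)) (\<lambda>i. \<psi> (real i))"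
    using integrable_poisson_dist_linear_growth[OF lg k, of 0 1] by simp
  have "poisson_transform \<psi> (k + \<theta>) = E_pois k (\<lambda>i. E_pois \<theta> (\<lambda>j. \<psi> (real i + real j)))"
    by (rule poisson_transform_add[OF lg k th(1)])
  also have "\<dots> \<le> E_pois k (\<lambda>i. (1 - \<theta>) * \<psi> (real i) + \<theta> * E_pois 1 (\<lambda>j. \<psi> (real i + real j)))"
  proof (rule integral_mono)
    show "E_pois \<theta> (\<lambda>j. \<psi> (real i + real j))
        \<le> (1 - \<theta>) * \<psi> (real i) + \<theta> * E_pois 1 (\<lambda>j. \<psi> (real i + real j))" for i
      using poisson_transform_le_chord[OF convex_on_affine_comp[OF cv, of "real i" 1]
          linear_growth_affine_comp[OF lg, of "real i" 1] th]
      by (simp add: poisson_transform_def)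
  qed (use integrable_E_pois_linear_growth[OF lg k th(1), of 1] int0 int1 in auto)
  also have "\<dots> = (1 - \<theta>) * poisson_transform \<psi> k + \<theta> * poisson_transform \<psi> (k + 1)"
    using int0 int1 poisson_transform_add[OF lg k, of 1]
    by (simp add: Bochner_Integration.integral_add poisson_transform_def)
  finally show ?thesis .
qed

text \<open>Poisson(\<open>m + 1\<close>) is Poisson(1) plus an independent Poisson(\<open>m\<close>), and by induction the
  latter may be replaced by \<open>m\<close> times a Poisson(1) variable \<open>Y\<close>. For \<open>X, Y\<close> i.i.d.,
  \<open>X + m Y\<close> is a convex combination of \<open>(m + 1) X\<close> and \<open>(m + 1) Y\<close>.\<close>

lemma poisson_transform_nat_le_scaled_poisson:
  "convex_on UNIV \<psi> \<Longrightarrow> linear_growth \<psi> \<Longrightarrow> poisson_transform \<psi> (real m) \<le> scaled_poisson \<psi> (real m)"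
proof (induction m arbitrary: \<psi>)
  case 0
  then show ?case by (simp add: poisson_transform_def scaled_poisson_def poisson_dist_0)
next
  case (Suc m)
  note cv = Suc.prems(1) and lg = Suc.prems(2)
  define M where "M = real m"
  have M: "M \<ge> 0" by (simp add: M_def)
  have int_scaled: "integrable (measure_pmf (poisson_dist 1)) (\<lambda>k. \<psi> ((M + 1) * real k))"
    using integrable_poisson_dist_linear_growth[OF lg, of 1 0 "M + 1"] M by simp
  have "poisson_transform \<psi> (real (Suc m)) = E_pois 1 (\<lambda>i. E_pois M (\<lambda>j. \<psi> (real i + real j)))"
    using poisson_transform_add[OF lg _ M, of 1] by (simp add: M_def add.commute)
  also have "\<dots> \<le> E_pois 1 (\<lambda>i. E_pois 1 (\<lambda>k. \<psi> (real i + M * real k)))"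
  proof (rule integral_mono)
    show "E_pois M (\<lambda>j. \<psi> (real i + real j)) \<le> E_pois 1 (\<lambda>k. \<psi> (real i + M * real k))" for i
      using Suc.IH[OF convex_on_affine_comp[OF cv, of "real i" 1] linear_growth_affine_comp[OF lg, of "real i" 1]]
      by (simp add: poisson_transform_def scaled_poisson_def M_def)
  qed (use integrable_E_pois_linear_growth[OF lg _ M, of 1 1]
      integrable_E_pois_linear_growth[OF lg _ _ M, of 1 1] in auto)
  also have "\<dots> \<le> E_pois 1 (\<lambda>i. M / (M + 1) * scaled_poisson \<psi> (M + 1) + 1 / (M + 1) * \<psi> ((M + 1) * real i))"
  proof (rule integral_mono)
    fix i :: nat
    have "E_pois 1 (\<lambda>k. \<psi> (real i + M * real k))
        \<le> E_pois 1 (\<lambda>k. M / (M + 1) * \<psi> ((M + 1) * real k) + 1 / (M + 1) * \<psi> ((M + 1) * real i))"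
      using integrable_poisson_dist_linear_growth[OF lg, of 1 "real i" M] M int_scaled
      by (intro integral_mono convex_on_split[OF cv M]) auto
    also have "\<dots> = M / (M + 1) * scaled_poisson \<psi> (M + 1) + 1 / (M + 1) * \<psi> ((M + 1) * real i)"
      using int_scaled unfolding scaled_poisson_def by (simp add: Bochner_Integration.integral_add)
    finally show "E_pois 1 (\<lambda>k. \<psi> (real i + M * real k))
        \<le> M / (M + 1) * scaled_poisson \<psi> (M + 1) + 1 / (M + 1) * \<psi> ((M + 1) * real i)" .
  qed (use integrable_E_pois_linear_growth[OF lg _ _ M, of 1 1] int_scaled in auto)
  also have "\<dots> = (M / (M + 1) + 1 / (M + 1)) * scaled_poisson \<psi> (M + 1)"
    using int_scaled unfolding scaled_poisson_def
    by (simp add: Bochner_Integration.integral_add distrib_right)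
  also have "M / (M + 1) + 1 / (M + 1) = 1"
    using M by (simp add: add_divide_distrib[symmetric])
  finally show ?case by (simp add: M_def add.commute)
qed

lemma poisson_transform_le_scaled_poisson_interp:
  assumes cv: "convex_on UNIV \<psi>" and lg: "linear_growth \<psi>" and l: "l \<ge> 0"
  shows "poisson_transform \<psi> l \<le> scaled_poisson_interp \<psi> l"
proof -
  define n where "n = nat \<lfloor>l\<rfloor>"
  have n: "real_of_int \<lfloor>l\<rfloor> = real n" using l by (simp add: n_def)
  define \<theta> where "\<theta> = l - real n"
  have th: "0 \<le> \<theta>" "\<theta> \<le> 1" unfolding \<theta>_def using n by linarith+
  have "poisson_transform \<psi> l = poisson_transform \<psi> (real n + \<theta>)" by (simp add: \<theta>_def)
  also have "\<dots> \<le> (1 - \<theta>) * poisson_transform \<psi> (real n) + \<theta> * poisson_transform \<psi> (real n + 1)"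
    by (rule poisson_transform_le_interp[OF cv lg _ th]) simp
  also have "\<dots> \<le> (1 - \<theta>) * scaled_poisson \<psi> (real n) + \<theta> * scaled_poisson \<psi> (real n + 1)"
    using poisson_transform_nat_le_scaled_poisson[OF cv lg, of n]
      poisson_transform_nat_le_scaled_poisson[OF cv lg, of "Suc n"] th
    by (intro add_mono mult_left_mono) (auto simp: add.commute)
  also have "\<dots> = scaled_poisson_interp \<psi> l"
    by (simp add: scaled_poisson_interp_def frac_def n \<theta>_def)
  finally show ?thesis .
qed

section \<open>Sums of independent Bernoulli variables\<close>

lemma sum_zero_one_eq_of_nat:
  fixes x :: "nat \<Rightarrow> real"
  assumes "\<And>i. i < n \<Longrightarrow> x i \<in> {0, 1}"
  shows "\<exists>k\<le>n. (\<Sum>i<n. x i) = real k"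
  using assms
proof (induction n)
  case (Suc n)
  then obtain k where k: "k \<le> n" "(\<Sum>i<n. x i) = real k" by auto
  consider "x n = 0" | "x n = 1" using Suc.prems[of n] by auto
  then show ?case
    by cases (use k in \<open>auto intro: exI[of _ k] exI[of _ "Suc k"]\<close>)
qed simp

context prob_space
begin

lemma integrable_linear_growth_comp:
  assumes cv: "convex_on UNIV \<phi>" and lg: "linear_growth \<phi>"
    and Z: "integrable M Z" "\<And>\<omega>. \<omega> \<in> space M \<Longrightarrow> Z \<omega> \<ge> 0"
  shows "integrable M (\<lambda>\<omega>. \<phi> (Z \<omega>))"
proof -
  obtain a b where ab: "\<And>x. x \<ge> 0 \<Longrightarrow> \<bar>\<phi> x\<bar> \<le> a + b * x" and "b \<ge> 0"
    using lg linear_growthE by blast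
  show ?thesis
  proof (rule Bochner_Integration.integrable_bound)
    show "integrable M (\<lambda>\<omega>. \<bar>a\<bar> + b * Z \<omega>)"
      using Z(1) by simp
    show "(\<lambda>\<omega>. \<phi> (Z \<omega>)) \<in> borel_measurable M"
      using borel_measurable_continuous_on[OF convex_on_continuous[OF open_UNIV cv] borel_measurable_integrable[OF Z(1)]] .
    show "AE \<omega> in M. norm (\<phi> (Z \<omega>)) \<le> norm (\<bar>a\<bar> + b * Z \<omega>)"
    proof (rule AE_I2)
      fix \<omega> assume "\<omega> \<in> space M"
      then show "norm (\<phi> (Z \<omega>)) \<le> norm (\<bar>a\<bar> + b * Z \<omega>)"
        using ab[of "Z \<omega>"] Z(2)[of \<omega>] \<open>b \<ge> 0\<close> by simp
    qed
  qed
qed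

lemma integrable_powr_bernoulli_sum:
  fixes X :: "nat \<Rightarrow> 'a \<Rightarrow> real"
  assumes X_rv: "\<And>i. i < n \<Longrightarrow> X i \<in> borel_measurable M"
    and X_01: "\<And>i \<omega>. i < n \<Longrightarrow> \<omega> \<in> space M \<Longrightarrow> X i \<omega> \<in> {0, 1}"
    and q: "q \<ge> 0"
  shows "integrable M (\<lambda>\<omega>. \<bar>\<Sum>i<n. X i \<omega>\<bar> powr q)"
proof (rule integrable_const_bound[where B="real n powr q"])
  show "AE \<omega> in M. norm (\<bar>\<Sum>i<n. X i \<omega>\<bar> powr q) \<le> real n powr q"
  proof (rule AE_I2)
    fix \<omega> assume "\<omega> \<in> space M"
    then obtain k where "k \<le> n" "(\<Sum>i<n. X i \<omega>) = real k"
      using sum_zero_one_eq_of_nat[of n "\<lambda>i. X i \<omega>"] X_01 by blast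
    then show "norm (\<bar>\<Sum>i<n. X i \<omega>\<bar> powr q) \<le> real n powr q"
      using q by (simp add: powr_mono2)
  qed
  show "(\<lambda>\<omega>. \<bar>\<Sum>i<n. X i \<omega>\<bar> powr q) \<in> borel_measurable M"
    using X_rv by measurable
qed

lemma expectation_add_bernoulli:
  assumes X: "X \<in> borel_measurable M" "\<And>\<omega>. \<omega> \<in> space M \<Longrightarrow> X \<omega> \<in> {0, 1}"
    and S: "S \<in> borel_measurable M" "\<And>\<omega>. \<omega> \<in> space M \<Longrightarrow> 0 \<le> S \<omega> \<and> S \<omega> \<le> B"
    and indep: "indep_var borel X borel S"
    and cv: "convex_on UNIV \<psi>" and lg: "linear_growth \<psi>"
  shows "(\<integral>\<omega>. \<psi> (S \<omega> + X \<omega>) \<partial>M) = (\<integral>\<omega>. bernoulli_shift (expectation X) \<psi> (S \<omega>) \<partial>M)"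
proof -
  define p where "p = expectation X"
  have int_X: "integrable M X"
    using X by (intro integrable_const_bound[where B=1]) force+
  have "integrable M S"
    using S by (intro integrable_const_bound[where B=B]) force+
  then have int_shift: "integrable M (\<lambda>\<omega>. \<psi> (S \<omega> + c))" if "c \<ge> 0" for c
    using S(2) that by (intro integrable_linear_growth_comp[OF cv lg]) force+
  have indep_shift: "indep_var borel X borel (\<lambda>\<omega>. \<psi> (S \<omega> + c))" for c
  proof -
    have "(\<lambda>s. \<psi> (s + c)) \<in> borel_measurable borel"
      using convex_on_affine_comp[OF cv, of c 1]
      by (intro borel_measurable_continuous_onI) (simp add: add.commute convex_on_continuous)
    from indep_var_compose[OF indep measurable_ident this]
    show ?thesis by (simp add: comp_def)
  qed
  have product: "(\<integral>\<omega>. X \<omega> * \<psi> (S \<omega> + c) \<partial>M) = p * (\<integral>\<omega>. \<psi> (S \<omega> + c) \<partial>M)"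
    and int_product: "integrable M (\<lambda>\<omega>. X \<omega> * \<psi> (S \<omega> + c))" if "c \<ge> 0" for c
    using indep_var_lebesgue_integral[OF indep_shift int_X int_shift[OF that]]
      indep_var_integrable[OF indep_shift int_X int_shift[OF that]] by (simp_all add: p_def)
  have "(\<integral>\<omega>. \<psi> (S \<omega> + X \<omega>) \<partial>M)
      = (\<integral>\<omega>. \<psi> (S \<omega> + 0) - X \<omega> * \<psi> (S \<omega> + 0) + X \<omega> * \<psi> (S \<omega> + 1) \<partial>M)"
    using X(2) by (intro Bochner_Integration.integral_cong) force+
  also have "\<dots> = (1 - p) * (\<integral>\<omega>. \<psi> (S \<omega> + 0) \<partial>M) + p * (\<integral>\<omega>. \<psi> (S \<omega> + 1) \<partial>M)"
    using int_shift[of 0] int_product[of 0] int_product[of 1] product[of 0] product[of 1]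
    by (simp add: algebra_simps)
  also have "\<dots> = (\<integral>\<omega>. bernoulli_shift p \<psi> (S \<omega>) \<partial>M)"
    using int_shift[of 0] int_shift[of 1] by (simp add: bernoulli_shift_def)
  finally show ?thesis by (simp add: p_def)
qed

lemma expectation_bernoulli_sum_le_poisson_transform:
  fixes X :: "nat \<Rightarrow> 'a \<Rightarrow> real"
  assumes "\<And>i. i < n \<Longrightarrow> X i \<in> borel_measurable M"
    and "\<And>i \<omega>. i < n \<Longrightarrow> \<omega> \<in> space M \<Longrightarrow> X i \<omega> \<in> {0, 1}"
    and "indep_vars (\<lambda>_. borel) X {..<n}"
    and "convex_on UNIV \<psi>" and "linear_growth \<psi>"
  shows "(\<integral>\<omega>. \<psi> (\<Sum>i<n. X i \<omega>) \<partial>M) \<le> poisson_transform \<psi> (\<Sum>i<n. expectation (X i))"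
  using assms
proof (induction n arbitrary: \<psi>)
  case 0
  then show ?case by (simp add: poisson_transform_def poisson_dist_0 prob_space)
next
  case (Suc n)
  note X_rv = Suc.prems(1) and X_01 = Suc.prems(2) and cv = Suc.prems(4) and lg = Suc.prems(5)
  define p where "p = expectation (X n)"
  define l where "l = (\<Sum>i<n. expectation (X i))"
  have X_bounds: "0 \<le> X i \<omega> \<and> X i \<omega> \<le> 1" if "i < Suc n" "\<omega> \<in> space M" for i \<omega>
    using X_01[OF that] by auto
  have int_X: "integrable M (X i)" if "i < Suc n" for i
    using X_bounds[OF that] X_rv[OF that] by (intro integrable_const_bound[where B=1]) auto
  have p: "0 \<le> p" "p \<le> 1"
    using integral_mono[OF int_X[of n] integrable_const, of 1] X_bounds[of n]
    by (auto simp: p_def prob_space intro!: integral_nonneg_AE)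
  have l: "l \<ge> 0"
    unfolding l_def using X_bounds by (intro sum_nonneg integral_nonneg_AE AE_I2) auto
  have sum_bounds: "0 \<le> (\<Sum>i<n. X i \<omega>) \<and> (\<Sum>i<n. X i \<omega>) \<le> real n" if "\<omega> \<in> space M" for \<omega>
    using sum_mono[of "{..<n}" "\<lambda>i. X i \<omega>" "\<lambda>_. 1"] X_bounds[OF _ that]
    by (auto intro!: sum_nonneg)
  have indep: "indep_var borel (X n) borel (\<lambda>\<omega>. \<Sum>i<n. X i \<omega>)"
    using indep_vars_subset[OF Suc.prems(3), of "insert n {..<n}"]
    by (intro indep_vars_sum) auto
  have "(\<integral>\<omega>. \<psi> (\<Sum>i<Suc n. X i \<omega>) \<partial>M) = (\<integral>\<omega>. bernoulli_shift p \<psi> (\<Sum>i<n. X i \<omega>) \<partial>M)"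
    unfolding p_def using X_rv X_01 sum_bounds indep cv lg
    by (simp only: sum.lessThan_Suc) (rule expectation_add_bernoulli; force)
  also have "\<dots> \<le> poisson_transform (bernoulli_shift p \<psi>) l"
    unfolding l_def using Suc.prems(1-3)
    by (intro Suc.IH convex_bernoulli_shift[OF cv p] linear_growth_bernoulli_shift[OF lg p])
      (auto intro: indep_vars_subset)
  also have "\<dots> \<le> poisson_transform \<psi> (\<Sum>i<Suc n. expectation (X i))"
    using poisson_transform_bernoulli_shift_le[OF cv lg l p] by (simp add: l_def p_def)
  finally show ?case .
qed

end

section \<open>Mixing with an independent Poisson variable\<close>

lemma sets_vimage_algebra_comp_subset:
  assumes Q: "Q \<in> X \<rightarrow> space MQ" and h: "h \<in> measurable MQ N"
  shows "sets (vimage_algebra X (\<lambda>x. h (Q x)) N) \<subseteq> sets (vimage_algebra X Q MQ)"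
proof (rule sets_image_in_sets')
  show "X \<in> sets (vimage_algebra X Q MQ)"
    by (rule sets_vimage_algebra_space)
  have "(\<lambda>x. h (Q x)) \<in> measurable (vimage_algebra X Q MQ) N"
    using measurable_comp[OF measurable_vimage_algebra1[OF Q] h] by (simp add: comp_def)
  from measurable_sets[OF this]
  show "(\<lambda>x. h (Q x)) -` A \<inter> X \<in> sets (vimage_algebra X Q MQ)" if "A \<in> sets N" for A
    using that by simp
qed

context prob_space
begin

lemma indep_var_comp_of_indep_vimage_algebra:
  assumes indep: "indep_set (sets (vimage_algebra (space M) P MP)) (sets (vimage_algebra (space M) V MV))"
    and P: "P \<in> measurable M MP" and V: "V \<in> measurable M MV"
    and f: "f \<in> measurable MP N" and g: "g \<in> measurable MV N"
  shows "indep_var N (\<lambda>\<omega>. f (P \<omega>)) N (\<lambda>\<omega>. g (V \<omega>))"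
proof -
  have "sets (vimage_algebra (space M) (\<lambda>\<omega>. f (P \<omega>)) N) \<subseteq> sets (vimage_algebra (space M) P MP)"
    using measurable_space[OF P] by (intro sets_vimage_algebra_comp_subset[OF _ f]) auto
  moreover have "sets (vimage_algebra (space M) (\<lambda>\<omega>. g (V \<omega>)) N) \<subseteq> sets (vimage_algebra (space M) V MV)"
    using measurable_space[OF V] by (intro sets_vimage_algebra_comp_subset[OF _ g]) auto
  ultimately have "indep_set (sets (vimage_algebra (space M) (\<lambda>\<omega>. f (P \<omega>)) N))
      (sets (vimage_algebra (space M) (\<lambda>\<omega>. g (V \<omega>)) N))"
    using indep unfolding indep_sets2_eq by blast
  moreover have "random_variable N (\<lambda>\<omega>. f (P \<omega>))" "random_variable N (\<lambda>\<omega>. g (V \<omega>))"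
    using measurable_comp[OF P f] measurable_comp[OF V g] by (simp_all add: comp_def)
  ultimately show ?thesis
    unfolding indep_var_eq sets_vimage_algebra by blast
qed

lemma poisson_rv_integral:
  fixes f :: "nat \<Rightarrow> real"
  assumes P: "P \<in> measurable M (count_space UNIV)" "distr M (count_space UNIV) P = measure_pmf (poisson_pmf 1)"
  shows "integrable M (\<lambda>\<omega>. f (P \<omega>)) \<longleftrightarrow> integrable (measure_pmf (poisson_pmf 1)) f"
    and "(\<integral>\<omega>. f (P \<omega>) \<partial>M) = E_pois 1 f"
  using integrable_distr_eq[OF P(1), of f] integral_distr[OF P(1), of f] P(2) by simp_all

lemma expectation_poisson_affine:
  fixes P S :: "'a \<Rightarrow> nat" and \<alpha> \<beta> :: "nat \<Rightarrow> real"
  assumes P: "P \<in> measurable M (count_space UNIV)" "distr M (count_space UNIV) P = measure_pmf (poisson_pmf 1)"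
    and int_S: "integrable M (\<lambda>\<omega>. real (S \<omega>))"
    and indep: "indep_var (count_space UNIV) P (count_space UNIV) S"
    and int_\<alpha>: "integrable (measure_pmf (poisson_dist 1)) \<alpha>"
    and int_\<beta>: "integrable (measure_pmf (poisson_dist 1)) \<beta>"
  shows "integrable M (\<lambda>\<omega>. \<alpha> (P \<omega>) + \<beta> (P \<omega>) * real (S \<omega>))"
    and "expectation (\<lambda>\<omega>. \<alpha> (P \<omega>) + \<beta> (P \<omega>) * real (S \<omega>))
      = E_pois 1 \<alpha> + E_pois 1 \<beta> * expectation (\<lambda>\<omega>. real (S \<omega>))"
proof -
  have "\<beta> \<in> borel_measurable (count_space UNIV)" "real \<in> borel_measurable (count_space UNIV)"
    by simp_all
  from indep_var_compose[OF indep this]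
  have indep_\<beta>: "indep_var borel (\<lambda>\<omega>. \<beta> (P \<omega>)) borel (\<lambda>\<omega>. real (S \<omega>))"
    by (simp add: comp_def)
  have int_P: "integrable M (\<lambda>\<omega>. f (P \<omega>))" if "integrable (measure_pmf (poisson_dist 1)) f"
    for f :: "nat \<Rightarrow> real"
    using that poisson_rv_integral(1)[OF P, of f] by simp
  show "integrable M (\<lambda>\<omega>. \<alpha> (P \<omega>) + \<beta> (P \<omega>) * real (S \<omega>))"
    using int_P[OF int_\<alpha>] indep_var_integrable[OF indep_\<beta> int_P[OF int_\<beta>] int_S] by simp
  show "expectation (\<lambda>\<omega>. \<alpha> (P \<omega>) + \<beta> (P \<omega>) * real (S \<omega>))
      = E_pois 1 \<alpha> + E_pois 1 \<beta> * expectation (\<lambda>\<omega>. real (S \<omega>))"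
    using int_P[OF int_\<alpha>] indep_var_integrable[OF indep_\<beta> int_P[OF int_\<beta>] int_S]
      indep_var_lebesgue_integral[OF indep_\<beta> int_P[OF int_\<beta>] int_S]
      poisson_rv_integral(2)[OF P, of \<alpha>] poisson_rv_integral(2)[OF P, of \<beta>]
    by simp
qed

corollary integrable_poisson_mult:
  fixes P S :: "'a \<Rightarrow> nat"
  assumes P: "P \<in> measurable M (count_space UNIV)" "distr M (count_space UNIV) P = measure_pmf (poisson_pmf 1)"
    and int_S: "integrable M (\<lambda>\<omega>. real (S \<omega>))"
    and indep: "indep_var (count_space UNIV) P (count_space UNIV) S"
  shows "integrable M (\<lambda>\<omega>. real (P \<omega>) * real (S \<omega>))"
  using expectation_poisson_affine(1)[OF P int_S indep _ integrable_poisson_dist_real, of "\<lambda>_. 0"] by simp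

text \<open>For fixed \<open>j\<close>, the convex function \<open>s \<mapsto> \<psi> (j s)\<close> lies above its chord through
  \<open>\<lfloor>l\<rfloor>\<close> and \<open>\<lfloor>l\<rfloor> + 1\<close> at every integer \<open>s\<close>; taking expectations with \<open>j = P\<close> and
  \<open>s = S\<close> independent yields the interpolation at \<open>l = E S\<close>.\<close>

lemma scaled_poisson_interp_le_expectation:
  fixes P S :: "'a \<Rightarrow> nat"
  assumes P: "P \<in> measurable M (count_space UNIV)" "distr M (count_space UNIV) P = measure_pmf (poisson_pmf 1)"
    and int_S: "integrable M (\<lambda>\<omega>. real (S \<omega>))"
    and indep: "indep_var (count_space UNIV) P (count_space UNIV) S"
    and cv: "convex_on UNIV \<psi>" and lg: "linear_growth \<psi>"
  shows "scaled_poisson_interp \<psi> (expectation (\<lambda>\<omega>. real (S \<omega>)))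
      \<le> expectation (\<lambda>\<omega>. \<psi> (real (P \<omega>) * real (S \<omega>)))"
proof -
  define l where "l = expectation (\<lambda>\<omega>. real (S \<omega>))"
  have "l \<ge> 0" unfolding l_def by (intro integral_nonneg_AE) auto
  then obtain K :: nat where K: "\<lfloor>l\<rfloor> = int K"
    using zero_le_floor by (metis nonneg_int_cases)
  define \<beta> where "\<beta> j = \<psi> ((K + 1) * real j) - \<psi> (K * real j)" for j :: nat
  define \<alpha> where "\<alpha> j = \<psi> (K * real j) - \<beta> j * K" for j :: nat
  have int_scaled: "integrable (measure_pmf (poisson_dist 1)) (\<lambda>j. \<psi> (c * real j))" if "c \<ge> 0" for c
    using integrable_poisson_dist_linear_growth[OF lg _ _ that, of 1 0] by simp
  have int_\<beta>: "integrable (measure_pmf (poisson_dist 1)) \<beta>"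
    unfolding \<beta>_def[abs_def] using int_scaled by auto
  have int_\<alpha>: "integrable (measure_pmf (poisson_dist 1)) \<alpha>"
    unfolding \<alpha>_def[abs_def] using int_scaled int_\<beta> by auto
  have support: "\<alpha> j + \<beta> j * real s \<le> \<psi> (real j * real s)" for j s :: nat
  proof -
    have "real s \<le> real K \<or> real K + 1 \<le> real s" by (cases "s \<le> K") auto
    then have "\<psi> (real j * K) + (\<psi> (real j * (K + 1)) - \<psi> (real j * K)) * (real s - K)
        \<le> \<psi> (real j * real s)"
      using convex_on_unit_chord_le[OF convex_on_affine_comp[OF cv, of 0 "real j"], of "real s" "real K"]
      by (simp add: add.commute)
    then show ?thesis
      by (simp add: \<alpha>_def \<beta>_def algebra_simps)
  qed
  have E_\<beta>: "E_pois 1 \<beta> = scaled_poisson \<psi> (K + 1) - scaled_poisson \<psi> K"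
    unfolding \<beta>_def[abs_def] scaled_poisson_def using int_scaled[of K] int_scaled[of "K + 1"] by simp
  have E_\<alpha>: "E_pois 1 \<alpha> = scaled_poisson \<psi> K - E_pois 1 \<beta> * K"
    unfolding \<alpha>_def[abs_def] scaled_poisson_def using int_scaled[of K] int_\<beta> by simp
  have "scaled_poisson_interp \<psi> l = E_pois 1 \<alpha> + E_pois 1 \<beta> * l"
    unfolding E_\<alpha> E_\<beta> by (simp add: scaled_poisson_interp_def frac_def K algebra_simps)
  also have "\<dots> = expectation (\<lambda>\<omega>. \<alpha> (P \<omega>) + \<beta> (P \<omega>) * real (S \<omega>))"
    using expectation_poisson_affine(2)[OF P int_S indep int_\<alpha> int_\<beta>] by (simp add: l_def)
  also have "\<dots> \<le> expectation (\<lambda>\<omega>. \<psi> (real (P \<omega>) * real (S \<omega>)))"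
    using expectation_poisson_affine(1)[OF P int_S indep int_\<alpha> int_\<beta>] integrable_poisson_mult[OF P int_S indep]
    by (intro integral_mono support integrable_linear_growth_comp[OF cv lg]) auto
  finally show ?thesis
    by (simp add: l_def)
qed

lemma expectation_poisson_mult_powr:
  fixes P S :: "'a \<Rightarrow> nat"
  assumes P: "P \<in> measurable M (count_space UNIV)" "distr M (count_space UNIV) P = measure_pmf (poisson_pmf 1)"
    and indep: "indep_var (count_space UNIV) P (count_space UNIV) S"
    and q: "q \<ge> 0" and int_S: "integrable M (\<lambda>\<omega>. real (S \<omega>) powr q)"
  shows "integrable M (\<lambda>\<omega>. \<bar>real (P \<omega>) * real (S \<omega>)\<bar> powr q)"
    and "expectation (\<lambda>\<omega>. \<bar>real (P \<omega>) * real (S \<omega>)\<bar> powr q) = A_q q * expectation (\<lambda>\<omega>. real (S \<omega>) powr q)"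
proof -
  have factor: "\<bar>real (P \<omega>) * real (S \<omega>)\<bar> powr q = real (P \<omega>) powr q * real (S \<omega>) powr q" for \<omega>
    by (simp add: powr_mult abs_mult)
  have "(\<lambda>k. real k powr q) \<in> borel_measurable (count_space UNIV)" by simp
  from indep_var_compose[OF indep this this]
  have indep_powr: "indep_var borel (\<lambda>\<omega>. real (P \<omega>) powr q) borel (\<lambda>\<omega>. real (S \<omega>) powr q)"
    by (simp add: comp_def)
  have int_P: "integrable M (\<lambda>\<omega>. real (P \<omega>) powr q)"
    using poisson_rv_integral(1)[OF P, of "\<lambda>k. real k powr q"] integrable_poisson_dist_powr[OF _ q, of 1]
    by simp
  show "integrable M (\<lambda>\<omega>. \<bar>real (P \<omega>) * real (S \<omega>)\<bar> powr q)"
    unfolding factor by (rule indep_var_integrable[OF indep_powr int_P int_S])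
  show "expectation (\<lambda>\<omega>. \<bar>real (P \<omega>) * real (S \<omega>)\<bar> powr q) = A_q q * expectation (\<lambda>\<omega>. real (S \<omega>) powr q)"
    unfolding factor indep_var_lebesgue_integral[OF indep_powr int_P int_S] A_q_def
    using poisson_rv_integral(2)[OF P, of "\<lambda>k. real k powr q"] by simp
qed

end

section \<open>The convex order and moment bounds\<close>

lemma cx_le_bernoulli_sum_poisson_mult:
  fixes M :: "'a measure" and N :: "'b measure" and X :: "nat \<Rightarrow> 'a \<Rightarrow> real" and P S :: "'b \<Rightarrow> nat"
  assumes "prob_space M" and "prob_space N"
    and X_rv: "\<And>i. i < n \<Longrightarrow> X i \<in> borel_measurable M"
    and X_01: "\<And>i \<omega>. i < n \<Longrightarrow> \<omega> \<in> space M \<Longrightarrow> X i \<omega> \<in> {0, 1}"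
    and X_indep: "prob_space.indep_vars M (\<lambda>_. borel) X {..<n}"
    and P: "P \<in> measurable N (count_space UNIV)" "distr N (count_space UNIV) P = measure_pmf (poisson_pmf 1)"
    and int_S: "integrable N (\<lambda>\<omega>. real (S \<omega>))"
    and indep: "prob_space.indep_var N (count_space UNIV) P (count_space UNIV) S"
    and mean: "(\<Sum>i<n. \<integral>\<omega>. X i \<omega> \<partial>M) = (\<integral>\<omega>. real (S \<omega>) \<partial>N)"
  shows "cx_le M (\<lambda>\<omega>. \<Sum>i<n. X i \<omega>) N (\<lambda>\<omega>. real (P \<omega>) * real (S \<omega>))"
  unfolding cx_le_def
proof (intro allI impI)
  interpret M: prob_space M by fact
  interpret N: prob_space N by fact
  fix \<phi> :: "real \<Rightarrow> real"
  assume cv: "convex_on UNIV \<phi>" and "integrable M (\<lambda>\<omega>. \<phi> (\<Sum>i<n. X i \<omega>))"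
    and int_N: "integrable N (\<lambda>\<omega>. \<phi> (real (P \<omega>) * real (S \<omega>)))"
  define \<psi> where "\<psi> = chord_max \<phi> n"
  have cv_\<psi>: "convex_on UNIV \<psi>" and lg_\<psi>: "linear_growth \<psi>"
    unfolding \<psi>_def by (rule convex_chord_max linear_growth_chord_max)+
  have "M.expectation (\<lambda>\<omega>. \<phi> (\<Sum>i<n. X i \<omega>)) = M.expectation (\<lambda>\<omega>. \<psi> (\<Sum>i<n. X i \<omega>))"
  proof (rule Bochner_Integration.integral_cong[OF refl])
    fix \<omega> assume "\<omega> \<in> space M"
    then obtain k where "k \<le> n" "(\<Sum>i<n. X i \<omega>) = real k"
      using sum_zero_one_eq_of_nat[of n "\<lambda>i. X i \<omega>"] X_01 by blast
    then show "\<phi> (\<Sum>i<n. X i \<omega>) = \<psi> (\<Sum>i<n. X i \<omega>)"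
      unfolding \<psi>_def using chord_max_eq[OF cv] by simp
  qed
  also have "\<dots> \<le> poisson_transform \<psi> (\<Sum>i<n. M.expectation (X i))"
    by (rule M.expectation_bernoulli_sum_le_poisson_transform[OF X_rv X_01 X_indep cv_\<psi> lg_\<psi>])
  also have "\<dots> \<le> scaled_poisson_interp \<psi> (N.expectation (\<lambda>\<omega>. real (S \<omega>)))"
    unfolding mean by (intro poisson_transform_le_scaled_poisson_interp[OF cv_\<psi> lg_\<psi>] integral_nonneg_AE) auto
  also have "\<dots> \<le> N.expectation (\<lambda>\<omega>. \<psi> (real (P \<omega>) * real (S \<omega>)))"
    by (rule N.scaled_poisson_interp_le_expectation[OF P int_S indep cv_\<psi> lg_\<psi>])
  also have "\<dots> \<le> N.expectation (\<lambda>\<omega>. \<phi> (real (P \<omega>) * real (S \<omega>)))"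
    using N.integrable_poisson_mult[OF P int_S indep] int_N
      chord_max_le[OF cv, of n "P _ * S _"]
    by (intro integral_mono N.integrable_linear_growth_comp[OF cv_\<psi> lg_\<psi>]) (auto simp: \<psi>_def)
  finally show "M.expectation (\<lambda>\<omega>. \<phi> (\<Sum>i<n. X i \<omega>)) \<le> N.expectation (\<lambda>\<omega>. \<phi> (real (P \<omega>) * real (S \<omega>)))" .
qed

lemma powr_norm_le_of_cx_le:
  assumes cx: "cx_le M U N V" and q: "q \<ge> 1"
    and int_U: "integrable M (\<lambda>\<omega>. \<bar>U \<omega>\<bar> powr q)" and int_V: "integrable N (\<lambda>\<omega>. \<bar>V \<omega>\<bar> powr q)"
  shows "(\<integral>\<omega>. \<bar>U \<omega>\<bar> powr q \<partial>M) powr (1 / q) \<le> (\<integral>\<omega>. \<bar>V \<omega>\<bar> powr q \<partial>N) powr (1 / q)"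
  using cx[unfolded cx_le_def, rule_format, OF convex_on_abs_powr[OF q] int_U int_V] q
  by (intro powr_mono2 integral_nonneg_AE) auto

theorem corollary3:
  fixes M :: "'a measure" and N :: "'b measure"
    and X :: "nat \<Rightarrow> 'a \<Rightarrow> real"
    and Y :: "nat \<Rightarrow> 'b \<Rightarrow> nat" and P :: "'b \<Rightarrow> nat" and n :: nat
  assumes "prob_space M" and "prob_space N"
    and X_rv: "\<And>i. i < n \<Longrightarrow> X i \<in> borel_measurable M"
    and X_01: "\<And>i \<omega>. i < n \<Longrightarrow> \<omega> \<in> space M \<Longrightarrow> X i \<omega> \<in> {0, 1}"
    and X_indep: "prob_space.indep_vars M (\<lambda>_. borel) X {..<n}"
    and Y_rv: "\<And>i. i < n \<Longrightarrow> Y i \<in> measurable N (count_space UNIV)"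
    and Y_int: "\<And>i. i < n \<Longrightarrow> integrable N (\<lambda>\<omega>. real (Y i \<omega>))"
    and mean_eq: "\<And>i. i < n \<Longrightarrow> (\<integral>\<omega>. X i \<omega> \<partial>M) = (\<integral>\<omega>. real (Y i \<omega>) \<partial>N)"
    and P_rv: "P \<in> measurable N (count_space UNIV)"
    and P_poisson: "distr N (count_space UNIV) P = measure_pmf (poisson_pmf 1)"
    and P_indep: "prob_space.indep_set N
                    (sets (vimage_algebra (space N) P (count_space UNIV)))
                    (sets (vimage_algebra (space N) (\<lambda>\<omega>. \<lambda>i\<in>{..<n}. Y i \<omega>)
                       (PiM {..<n} (\<lambda>_. count_space UNIV))))"
  shows "cx_le M (\<lambda>\<omega>. \<Sum>i<n. X i \<omega>) N (\<lambda>\<omega>. real (P \<omega>) * real (\<Sum>i<n. Y i \<omega>))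
       \<and> (\<forall>q::real. q \<ge> 1 \<longrightarrow> integrable N (\<lambda>\<omega>. real (\<Sum>i<n. Y i \<omega>) powr q) \<longrightarrow>
            (\<integral>\<omega>. \<bar>\<Sum>i<n. X i \<omega>\<bar> powr q \<partial>M) powr (1/q)
              \<le> A_q q powr (1/q) * (\<integral>\<omega>. real (\<Sum>i<n. Y i \<omega>) powr q \<partial>N) powr (1/q))"
proof -
  interpret M: prob_space M by fact
  interpret N: prob_space N by fact
  have indep: "N.indep_var (count_space UNIV) P (count_space UNIV) (\<lambda>\<omega>. \<Sum>i<n. Y i \<omega>)"
    using N.indep_var_comp_of_indep_vimage_algebra[OF P_indep P_rv _ measurable_ident,
        where g="\<lambda>v. \<Sum>i<n. v i"] Y_rv
    by (simp add: measurable_restrict measurable_sum_nat measurable_component_singleton)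
  have mean: "(\<Sum>i<n. \<integral>\<omega>. X i \<omega> \<partial>M) = (\<integral>\<omega>. real (\<Sum>i<n. Y i \<omega>) \<partial>N)"
    using Y_int mean_eq by (simp add: Bochner_Integration.integral_sum)
  have cx: "cx_le M (\<lambda>\<omega>. \<Sum>i<n. X i \<omega>) N (\<lambda>\<omega>. real (P \<omega>) * real (\<Sum>i<n. Y i \<omega>))"
    using Y_int
    by (intro cx_le_bernoulli_sum_poisson_mult[OF assms(1,2) X_rv X_01 X_indep P_rv P_poisson _ indep mean])
      auto
  moreover have "(\<integral>\<omega>. \<bar>\<Sum>i<n. X i \<omega>\<bar> powr q \<partial>M) powr (1/q)
      \<le> A_q q powr (1/q) * (\<integral>\<omega>. real (\<Sum>i<n. Y i \<omega>) powr q \<partial>N) powr (1/q)"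
    if q: "q \<ge> 1" and int_S: "integrable N (\<lambda>\<omega>. real (\<Sum>i<n. Y i \<omega>) powr q)" for q
    using powr_norm_le_of_cx_le[OF cx q
        M.integrable_powr_bernoulli_sum[OF X_rv X_01 order_trans[OF zero_le_one q]]]
      N.expectation_poisson_mult_powr[OF P_rv P_poisson indep _ int_S] q
    by (simp add: A_q_def powr_mult integral_nonneg_AE)
  ultimately show ?thesis by blast
qed

end
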